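(* Let $m$ be a positive integer and suppose that complex numbers $c_0,c_1,\dots,c_{2m+1}$ satisfy, identically as meromorphic functions of $s\in\mathbb{C}$, $$c_{2m+1}\zeta(-2m-1,s+2m+1)+\cdots+c_1\zeta(-1,s+1)+c_0\,\zeta(0,s)/2\equiv0.$$ Then $c_0+c_1+c_2+\cdots+c_{2m+1}=0$.
   Context: For an integer $c\ge 0$, $\zeta(-c,s+c)$ denotes the Euler–Zagier double zeta function $\zeta(s_1,s_2)=\sum_{1\le n_1<n_2} n_1^{-s_1}n_2^{-s_2}$ evaluated at $(s_1,s_2)=(-c,s+c)$; i.e. it is the meromorphic continuation to all $s\in\mathbb{C}$ of the series $\sum_{m,n\ge1} m^{c}(m+n)^{-s-c}$, which converges absolutely for $\Re(s)>2$. *)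

theory Defs
  imports "HOL-Complex_Analysis.Complex_Analysis"
begin

text \<open>The series defining the Euler--Zagier double zeta value zeta(-c, s+c):
  sum over m, n >= 1 of m^c (m+n)^(-s-c); absolutely convergent for Re s > 2.\<close>
definition dzeta_series :: "nat \<Rightarrow> complex \<Rightarrow> complex" where
  "dzeta_series c s =
     (\<Sum>\<^sub>\<infinity>(m, n) \<in> {1..} \<times> {1..}.
        of_nat m ^ c * of_nat (m + n) powr (- (s + of_nat c)))"

end

(*
  Grouping the double series by N = m + n shows that for real x > 2, zeta(-k, x + k) is the
  Dirichlet series sum_N a_k(N) N^(-x) with a_k(N) = N^(-k) sum_{0<i<N} i^k (dzeta_coeff k N).
  The assumed identity holds off a sparse set, hence at arbitrarily large real points, so the
  Dirichlet series with coefficients sum_k w_k a_k(N), where w_0 = c_0/2 and w_k = c_k otherwise,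
  has zeros tending to infinity.  These coefficients grow at most linearly, so they all vanish.
  Since a_0(N) = N - 1 and a_k(N) = N/(k+1) - 1/2 + o(1) for k >= 1, the constant term
  -c_0/2 - sum_{k>=1} c_k/2 of sum_k w_k a_k(N) must vanish.  Only values at real s > 2 are used.
*)
theory Submission
  imports Defs "HOL-Real_Asymp.Real_Asymp"
begin

lemma has_sum_sum:
  fixes f :: "'i \<Rightarrow> 'a \<Rightarrow> 'b::topological_comm_monoid_add"
  assumes "finite I" "\<And>i. i \<in> I \<Longrightarrow> (f i has_sum s i) A"
  shows "((\<lambda>x. \<Sum>i\<in>I. f i x) has_sum (\<Sum>i\<in>I. s i)) A"
  using assms by (induction I rule: finite_induct) (auto intro!: has_sum_add)

lemma eventually_cosparse_imp_frequently_at_top_of_real: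
  assumes "eventually P (cosparse (UNIV :: complex set))"
  shows "\<exists>\<^sub>F x in at_top. P (complex_of_real x)"
  unfolding frequently_def eventually_at_top_linorder
proof
  assume "\<exists>X. \<forall>x\<ge>X. \<not> P (complex_of_real x)"
  then obtain X where X: "\<And>x. x \<ge> X \<Longrightarrow> \<not> P (complex_of_real x)"
    by blast
  have "filterlim complex_of_real (at (complex_of_real X)) (at_right X)"
    by (intro filterlim_atI tendsto_intros eventually_at_rightI[of X "X + 1"]) auto
  moreover have "eventually P (at (complex_of_real X))"
    using assms by (rule eventually_cosparse_imp_eventually_at) simp
  ultimately have "eventually (\<lambda>x. P (complex_of_real x)) (at_right X)"
    by (rule eventually_compose_filterlim[rotated])
  moreover have "eventually (\<lambda>x. x > X) (at_right X)"
    by (rule eventually_at_right_less)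
  ultimately have "\<exists>\<^sub>F x in at_right X. P (complex_of_real x) \<and> x > X"
    by (intro eventually_frequently) (auto simp: eventually_conj_iff)
  then show False
    using X by (auto dest: frequently_ex)
qed

lemma powr_neg_mult_powr_le:
  fixes m n :: nat
  assumes "0 < n" "n < m" "\<sigma> \<le> x"
  shows "real m powr -x * real n powr x
           \<le> real n powr \<sigma> * (real n / real (Suc n)) powr (x - \<sigma>) * real m powr -\<sigma>"
proof -
  have "real m powr -x * real n powr x
          = real n powr \<sigma> * (real n / real m) powr (x - \<sigma>) * real m powr -\<sigma>"
    using assms by (simp add: powr_divide powr_diff powr_minus field_simps)
  also have "\<dots> \<le> real n powr \<sigma> * (real n / real (Suc n)) powr (x - \<sigma>) * real m powr -\<sigma>"
    using assms by (intro mult_left_mono mult_right_mono powr_mono2 divide_left_mono) auto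
  finally show ?thesis .
qed

lemma dirichlet_series_scaled_minus_coeff_bound:
  fixes a :: "nat \<Rightarrow> complex" and G :: "real \<Rightarrow> complex"
  assumes abs_summable: "(\<lambda>m. norm (a m) * real m powr -\<sigma>) summable_on UNIV"
    and has_sum: "((\<lambda>m. a m * of_real (real m powr -x)) has_sum G x) UNIV"
    and n: "n > 0" and below_n: "\<And>m. 0 < m \<Longrightarrow> m < n \<Longrightarrow> a m = 0" and x: "x \<ge> \<sigma>"
  shows "norm (G x * of_real (real n powr x) - a n)
           \<le> real n powr \<sigma> * (real n / real (Suc n)) powr (x - \<sigma>)
               * (\<Sum>\<^sub>\<infinity>m. norm (a m) * real m powr -\<sigma>)"
proof -
  define C where "C = real n powr \<sigma> * (real n / real (Suc n)) powr (x - \<sigma>)"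
  define D where "D m = a m * of_real (real m powr -x) * of_real (real n powr x)
                          - (if m = n then a n else 0)" for m
  have "((\<lambda>m. a m * of_real (real m powr -x) * of_real (real n powr x))
          has_sum G x * of_real (real n powr x)) UNIV"
    using has_sum by (rule has_sum_cmult_left)
  moreover have "((\<lambda>m. - (if m = n then a n else 0)) has_sum - a n) UNIV"
    by (intro has_sum_uminusI has_sum_finite_neutralI[of "{n}"]) auto
  ultimately have D_has_sum: "(D has_sum (G x * of_real (real n powr x) - a n)) UNIV"
    unfolding D_def diff_conv_add_uminus by (rule has_sum_add)
  have bound_has_sum: "((\<lambda>m. C * (norm (a m) * real m powr -\<sigma>))
                          has_sum (C * (\<Sum>\<^sub>\<infinity>m. norm (a m) * real m powr -\<sigma>))) UNIV"
    by (intro has_sum_cmult_right has_sum_infsum abs_summable)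
  have D_le: "norm (D m) \<le> C * (norm (a m) * real m powr -\<sigma>)" for m
  proof (cases "n < m")
    case True
    have "norm (D m) = norm (a m) * (real m powr -x * real n powr x)"
      using True by (simp add: D_def norm_mult)
    also have "\<dots> \<le> norm (a m) * (C * real m powr -\<sigma>)"
      unfolding C_def using True n x by (intro mult_left_mono powr_neg_mult_powr_le) auto
    finally show ?thesis
      by (simp only: ac_simps)
  next
    case False
    then consider "m = 0" | "0 < m" "m < n" | "m = n"
      by linarith
    then have "D m = 0"
    proof cases
      case 3
      then show ?thesis
        using n by (simp add: D_def mult.assoc flip: of_real_mult powr_add)
    qed (use n in \<open>simp_all add: D_def below_n\<close>)
    then show ?thesis
      by (simp add: C_def)
  qed
  show ?thesis
    using D_le unfolding C_def by (intro norm_infsum_le[OF D_has_sum bound_has_sum[unfolded C_def]]) auto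
qed

lemma dirichlet_series_tendsto_leading_coeff:
  fixes a :: "nat \<Rightarrow> complex" and G :: "real \<Rightarrow> complex"
  assumes abs_summable: "(\<lambda>m. norm (a m) * real m powr -\<sigma>) summable_on UNIV"
    and has_sum: "\<And>x. x \<ge> \<sigma> \<Longrightarrow> ((\<lambda>m. a m * of_real (real m powr -x)) has_sum G x) UNIV"
    and n: "n > 0" and below_n: "\<And>m. 0 < m \<Longrightarrow> m < n \<Longrightarrow> a m = 0"
  shows "((\<lambda>x. G x * of_real (real n powr x)) \<longlongrightarrow> a n) at_top"
proof -
  define b where "b = real n / real (Suc n)"
  define S where "S = (\<Sum>\<^sub>\<infinity>m. norm (a m) * real m powr -\<sigma>)"
  have "0 < b" "b < 1"
    using n by (auto simp: b_def)
  then have "((\<lambda>x. real n powr \<sigma> * b powr (x - \<sigma>) * S) \<longlongrightarrow> 0) at_top"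
    by real_asymp
  moreover have "\<forall>\<^sub>F x in at_top. norm (G x * of_real (real n powr x) - a n)
                                    \<le> real n powr \<sigma> * b powr (x - \<sigma>) * S"
    using eventually_ge_at_top[of \<sigma>] unfolding b_def S_def
    by eventually_elim (intro dirichlet_series_scaled_minus_coeff_bound abs_summable has_sum n below_n)
  ultimately have "((\<lambda>x. G x * of_real (real n powr x) - a n) \<longlongrightarrow> 0) at_top"
    by (rule Lim_null_comparison[rotated])
  then show ?thesis
    by (simp add: LIM_zero_iff)
qed

lemma dirichlet_series_coeff_eq_0:
  fixes a :: "nat \<Rightarrow> complex" and G :: "real \<Rightarrow> complex"
  assumes abs_summable: "(\<lambda>m. norm (a m) * real m powr -\<sigma>) summable_on UNIV"
    and has_sum: "\<And>x. x \<ge> \<sigma> \<Longrightarrow> ((\<lambda>m. a m * of_real (real m powr -x)) has_sum G x) UNIV"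
    and zeros: "\<exists>\<^sub>F x in at_top. G x = 0"
  shows "n > 0 \<Longrightarrow> a n = 0"
proof (induction n rule: less_induct)
  case (less n)
  show "a n = 0"
  proof (rule ccontr)
    assume "a n \<noteq> 0"
    moreover have "((\<lambda>x. G x * of_real (real n powr x)) \<longlongrightarrow> a n) at_top"
      using less by (intro dirichlet_series_tendsto_leading_coeff[OF abs_summable has_sum]) auto
    ultimately have "\<forall>\<^sub>F x in at_top. G x * of_real (real n powr x) \<noteq> 0"
      by (intro tendsto_imp_eventually_ne)
    then have "\<forall>\<^sub>F x in at_top. G x \<noteq> 0"
      by (auto elim: eventually_mono)
    with zeros show False
      by (simp add: frequently_def)
  qed
qed

lemma affine_sequence_tendsto_0D:
  fixes A B :: "'a::real_normed_field"
  assumes "(\<lambda>N. A * of_nat N + B) \<longlonglongrightarrow> 0"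
  shows "A = 0" and "B = 0"
proof -
  have "(\<lambda>N. (A * of_nat N + B) / of_nat N) \<longlonglongrightarrow> 0 * 0"
    using tendsto_mult[OF assms lim_1_over_n] by simp
  moreover have "\<forall>\<^sub>F N in sequentially. (A * of_nat N + B) / of_nat N = A + B / of_nat N"
    using eventually_gt_at_top[of 0] by eventually_elim (simp add: add_divide_distrib)
  ultimately have "(\<lambda>N. A + B / of_nat N) \<longlonglongrightarrow> 0"
    by (simp add: tendsto_cong)
  moreover have "(\<lambda>N. A + B / of_nat N) \<longlonglongrightarrow> A + 0"
    by (intro tendsto_intros)
  ultimately show "A = 0"
    using LIMSEQ_unique by fastforce
  with assms show "B = 0"
    by (simp add: LIMSEQ_const_iff)
qed

lemma one_over_power_tendsto_0: "k > 0 \<Longrightarrow> (\<lambda>N. 1 / real N ^ k) \<longlonglongrightarrow> 0"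
  by (intro tendsto_divide_0[OF tendsto_const] filterlim_at_top_imp_at_infinity
      filterlim_pow_at_top filterlim_real_sequentially)

definition power_sum :: "nat \<Rightarrow> nat \<Rightarrow> real" where
  "power_sum k N = (\<Sum>i = 1..<N. real i ^ k)"

lemma power_sum_nonneg: "0 \<le> power_sum k N"
  unfolding power_sum_def by (intro sum_nonneg) auto

lemma power_sum_le: "power_sum k N \<le> real N ^ Suc k"
proof -
  have "power_sum k N \<le> (\<Sum>i = 1..<N. real N ^ k)"
    unfolding power_sum_def by (intro sum_mono power_mono) auto
  also have "\<dots> \<le> real N * real N ^ k"
    by (cases N) (auto intro!: mult_right_mono)
  finally show ?thesis by simp
qed

lemma power_sum_Suc: "N \<ge> 1 \<Longrightarrow> power_sum k (Suc N) = power_sum k N + real N ^ k"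
  unfolding power_sum_def by simp

lemma power_Suc_eq_power_sums:
  assumes "N \<ge> 1"
  shows "real N ^ Suc k = 1 + (\<Sum>j\<le>k. real (Suc k choose j) * power_sum j N)"
  using assms
proof (induction N rule: dec_induct)
  case base
  show ?case by (simp add: power_sum_def)
next
  case (step N)
  have "real (Suc N) ^ Suc k = (\<Sum>j\<le>Suc k. real (Suc k choose j) * real N ^ j)"
    using binomial_ring[of "real N" 1 "Suc k"] by (simp add: add.commute)
  also have "\<dots> = real N ^ Suc k + (\<Sum>j\<le>k. real (Suc k choose j) * real N ^ j)"
    by simp
  also have "\<dots> = 1 + (\<Sum>j\<le>k. real (Suc k choose j) * power_sum j (Suc N))"
    using step.IH by (simp add: power_sum_Suc[OF step.hyps(1)] distrib_left sum.distrib)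
  finally show ?case .
qed

lemma power_sum_recurrence:
  assumes "N \<ge> 1"
  shows "real (Suc k) * power_sum k N
           = real N ^ Suc k - 1 - (\<Sum>j<k. real (Suc k choose j) * power_sum j N)"
  using power_Suc_eq_power_sums[OF assms, of k] by (simp add: lessThan_Suc_atMost[symmetric])

lemma power_sum_over_power_tendsto_0:
  assumes "Suc j < k"
  shows "(\<lambda>N. power_sum j N / real N ^ k) \<longlonglongrightarrow> 0"
proof (rule tendsto_sandwich[of "\<lambda>_. 0" _ _ "\<lambda>N. 1 / real N"])
  show "\<forall>\<^sub>F N in sequentially. 0 \<le> power_sum j N / real N ^ k"
    by (intro always_eventually allI divide_nonneg_nonneg power_sum_nonneg) auto
  show "\<forall>\<^sub>F N in sequentially. power_sum j N / real N ^ k \<le> 1 / real N"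
  proof (rule eventually_sequentiallyI[of 1])
    fix N :: nat
    assume N: "1 \<le> N"
    have "power_sum j N / real N ^ k \<le> real N ^ Suc j / real N ^ k"
      using N power_sum_le by (intro divide_right_mono) auto
    also have "\<dots> \<le> real N ^ (k - 1) / real N ^ k"
      using N assms by (intro divide_right_mono power_increasing) auto
    also have "\<dots> = 1 / real N"
      using N assms by (cases k) auto
    finally show "power_sum j N / real N ^ k \<le> 1 / real N" .
  qed
qed (auto intro: lim_const_over_n)

lemma power_sum_over_power_eq:
  assumes "N \<ge> 1"
  shows "power_sum k N / real N ^ p
           = (real N ^ Suc k / real N ^ p - 1 / real N ^ p
               - (\<Sum>j<k. real (Suc k choose j) * (power_sum j N / real N ^ p))) / real (Suc k)"
proof -
  have "power_sum k N / real N ^ p = real (Suc k) * power_sum k N / real N ^ p / real (Suc k)"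
    by (simp del: of_nat_Suc)
  also have "\<dots> = (real N ^ Suc k - 1 - (\<Sum>j<k. real (Suc k choose j) * power_sum j N))
                     / real N ^ p / real (Suc k)"
    by (simp only: power_sum_recurrence[OF assms])
  also have "\<dots> = (real N ^ Suc k / real N ^ p - 1 / real N ^ p
               - (\<Sum>j<k. real (Suc k choose j) * (power_sum j N / real N ^ p))) / real (Suc k)"
    by (simp add: diff_divide_distrib sum_divide_distrib del: power_Suc of_nat_Suc)
  finally show ?thesis .
qed

lemma power_sum_leading_term:
  "(\<lambda>N. power_sum k N / real N ^ Suc k) \<longlonglongrightarrow> 1 / real (Suc k)"
proof -
  have "(\<lambda>N. (1 - 1 / real N ^ Suc k
                - (\<Sum>j<k. real (Suc k choose j) * (power_sum j N / real N ^ Suc k))) / real (Suc k))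
        \<longlonglongrightarrow> (1 - 0 - (\<Sum>j<k. real (Suc k choose j) * 0)) / real (Suc k)"
    by (intro tendsto_intros power_sum_over_power_tendsto_0 one_over_power_tendsto_0) auto
  moreover have "\<forall>\<^sub>F N in sequentially.
      (1 - 1 / real N ^ Suc k
         - (\<Sum>j<k. real (Suc k choose j) * (power_sum j N / real N ^ Suc k))) / real (Suc k)
      = power_sum k N / real N ^ Suc k"
    using eventually_ge_at_top[of 1]
  proof eventually_elim
    case (elim N)
    then have "real N ^ Suc k / real N ^ Suc k = 1"
      by simp
    then show ?case
      unfolding power_sum_over_power_eq[OF elim, of k "Suc k"] by (simp only:)
  qed
  ultimately show ?thesis by (simp add: Lim_transform_eventually)
qed

lemma of_nat_Suc_Suc_choose_self: "real (Suc (Suc p) choose p) = real (Suc (Suc p)) * real (Suc p) / 2"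
proof -
  have "Suc (Suc p) choose p = Suc (Suc p) choose 2"
    using binomial_symmetric[of p "Suc (Suc p)"] by simp
  moreover have "even (Suc (Suc p) * Suc p)" by simp
  ultimately have "2 * (Suc (Suc p) choose p) = Suc (Suc p) * Suc p"
    by (simp only: choose_two diff_Suc_1 dvd_mult_div_cancel)
  then show ?thesis
    by (metis of_nat_mult of_nat_numeral nonzero_mult_div_cancel_left zero_neq_numeral)
qed

lemma power_sum_second_term_eq:
  assumes "N \<ge> 1"
  shows "power_sum k N / real N ^ k - real N / real (Suc k)
           = - (1 / real N ^ k + (\<Sum>j<k. real (Suc k choose j) * (power_sum j N / real N ^ k)))
               / real (Suc k)"
proof -
  have "real N ^ Suc k / real N ^ k = real N"
    using assms by simp
  then have "power_sum k N / real N ^ k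
      = (real N - 1 / real N ^ k - (\<Sum>j<k. real (Suc k choose j) * (power_sum j N / real N ^ k)))
          / real (Suc k)"
    unfolding power_sum_over_power_eq[OF assms, of k k] by (simp only:)
  moreover have "x - y / c = - (b + S) / c" if "x = (y - b - S) / c" for x y b S c :: real
    using that by (simp add: diff_divide_distrib add_divide_distrib)
  ultimately show ?thesis
    by blast
qed

lemma power_sum_second_term:
  "(\<lambda>N. power_sum k N / real N ^ k - real N / real (Suc k)) \<longlonglongrightarrow> (if k = 0 then -1 else -1 / 2)"
proof -
  have "\<forall>\<^sub>F N in sequentially.
      - (1 / real N ^ k + (\<Sum>j<k. real (Suc k choose j) * (power_sum j N / real N ^ k))) / real (Suc k)
      = power_sum k N / real N ^ k - real N / real (Suc k)"
    using eventually_ge_at_top[of 1] by eventually_elim (simp only: power_sum_second_term_eq)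
  moreover have "(\<lambda>N. - (1 / real N ^ k + (\<Sum>j<k. real (Suc k choose j) * (power_sum j N / real N ^ k)))
                    / real (Suc k)) \<longlonglongrightarrow> (if k = 0 then -1 else -1 / 2)"
  proof (cases k)
    case 0
    then show ?thesis by simp
  next
    case (Suc p)
    have limit_value: "- (0 + (\<Sum>j<p. real (Suc k choose j) * 0) + real (Suc k choose p) * (1 / real (Suc p)))
                 / real (Suc k) = - 1 / 2"
      using of_nat_Suc_Suc_choose_self[of p] Suc by (simp del: of_nat_Suc)
    have "(\<lambda>N. - (1 / real N ^ Suc p
                    + (\<Sum>j<p. real (Suc k choose j) * (power_sum j N / real N ^ Suc p))
                    + real (Suc k choose p) * (power_sum p N / real N ^ Suc p)) / real (Suc k))
          \<longlonglongrightarrow> - (0 + (\<Sum>j<p. real (Suc k choose j) * 0) + real (Suc k choose p) * (1 / real (Suc p)))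
                 / real (Suc k)"
      by (intro tendsto_intros power_sum_over_power_tendsto_0 one_over_power_tendsto_0
          power_sum_leading_term) auto
    moreover have "(if k = 0 then -1 else -1 / 2 :: real) = - 1 / 2"
      using Suc by simp
    ultimately show ?thesis
      unfolding limit_value by (simp only: Suc sum.lessThan_Suc add.assoc)
  qed
  ultimately show ?thesis
    by (rule Lim_transform_eventually[rotated])
qed

definition dzeta_coeff :: "nat \<Rightarrow> nat \<Rightarrow> real" where
  "dzeta_coeff k N = power_sum k N / real N ^ k"

lemma dzeta_coeff_nonneg: "0 \<le> dzeta_coeff k N"
  unfolding dzeta_coeff_def by (simp add: power_sum_nonneg)

lemma dzeta_coeff_le: "dzeta_coeff k N \<le> real N"
proof (cases "N = 0")
  case False
  then have "power_sum k N / real N ^ k \<le> real N ^ Suc k / real N ^ k"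
    by (intro divide_right_mono power_sum_le) auto
  with False show ?thesis
    by (simp add: dzeta_coeff_def)
qed (simp add: dzeta_coeff_def power_sum_def)

lemma dzeta_coeff_times_powr:
  "dzeta_coeff k N * real N powr -x = power_sum k N * real N powr -(x + real k)"
proof (cases "N = 0")
  case False
  have "real N powr -(x + real k) = real N powr -x * real N powr -real k"
    by (simp flip: powr_add)
  also have "real N powr -real k = inverse (real N ^ k)"
    using False by (simp add: powr_minus powr_realpow)
  finally show ?thesis
    by (simp add: dzeta_coeff_def divide_inverse)
qed (simp add: dzeta_coeff_def power_sum_def)

lemma summable_dzeta_coeff:
  assumes "x > 2"
  shows "(\<lambda>N. dzeta_coeff k N * real N powr -x) summable_on UNIV"
proof (rule summable_on_comparison_test)
  show "(\<lambda>N. real N powr (1 - x)) summable_on UNIV"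
    using assms by (subst summable_on_UNIV_nonneg_real_iff) (auto simp: summable_real_powr_iff)
  fix N :: nat
  have "dzeta_coeff k N * real N powr -x \<le> real N * real N powr -x"
    by (intro mult_right_mono dzeta_coeff_le) auto
  also have "\<dots> = real N powr 1 * real N powr -x"
    by simp
  also have "\<dots> = real N powr (1 - x)"
    by (subst powr_add[symmetric]) simp
  finally show "dzeta_coeff k N * real N powr -x \<le> real N powr (1 - x)" .
  show "0 \<le> dzeta_coeff k N * real N powr -x"
    by (simp add: dzeta_coeff_nonneg)
qed

lemma of_nat_powr_of_real: "(of_nat n :: complex) powr of_real y = of_real (real n powr y)"
  using powr_of_real[of "real n" y] by simp

lemma has_sum_dzeta_series:
  assumes "x > 2"
  shows "((\<lambda>N. complex_of_real (dzeta_coeff k N * real N powr -x)) has_sum dzeta_series k (of_real x))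
           UNIV"
proof -
  define a where "a N = dzeta_coeff k N * real N powr -x" for N
  define f where "f = (\<lambda>(N, i). real i ^ k * real N powr -(x + real k))"
  define h where "h = (\<lambda>(m, n). real m ^ k * real (m + n) powr -(x + real k))"
  have exponent: "- (complex_of_real x + of_nat k) = of_real (-(x + real k))"
    by simp
  have rows: "((\<lambda>i. f (N, i)) has_sum a N) {1..<N}" for N
    by (rule has_sum_finiteI)
      (auto simp: f_def a_def dzeta_coeff_times_powr power_sum_def sum_distrib_right)
  have a_summable: "a summable_on UNIV"
    unfolding a_def using assms by (rule summable_dzeta_coeff)
  have "f summable_on Sigma UNIV (\<lambda>N. {1..<N})"
    by (rule summable_on_SigmaI[OF rows a_summable]) (auto simp: f_def)
  then have "(f has_sum (\<Sum>\<^sub>\<infinity>N. a N)) (Sigma UNIV (\<lambda>N. {1..<N}))"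
    using a_summable by (intro has_sum_SigmaI[OF rows]) auto
  also have "?this \<longleftrightarrow> (h has_sum (\<Sum>\<^sub>\<infinity>N. a N)) ({1..} \<times> {1..})"
    by (rule has_sum_reindex_bij_witness[where i = "\<lambda>(m, n). (m + n, m)" and j = "\<lambda>(N, i). (i, N - i)"])
      (auto simp: f_def h_def)
  finally have "((\<lambda>p. complex_of_real (h p)) has_sum of_real (\<Sum>\<^sub>\<infinity>N. a N)) ({1..} \<times> {1..})"
    by (rule has_sum_of_real)
  moreover have "(\<lambda>(m, n). of_nat m ^ k * of_nat (m + n) powr (- (complex_of_real x + of_nat k)))
                  = (\<lambda>p. complex_of_real (h p))"
    by (simp only: h_def case_prod_unfold exponent of_nat_powr_of_real of_real_mult of_real_power
        of_real_of_nat_eq)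
  ultimately have "dzeta_series k (of_real x) = of_real (\<Sum>\<^sub>\<infinity>N. a N)"
    unfolding dzeta_series_def by (simp add: infsumI)
  moreover have "((\<lambda>N. complex_of_real (a N)) has_sum of_real (\<Sum>\<^sub>\<infinity>N. a N)) UNIV"
    by (intro has_sum_of_real has_sum_infsum a_summable)
  ultimately show ?thesis
    by (simp add: a_def)
qed

lemma dzeta_coeff_combination_eq_0D:
  fixes w :: "nat \<Rightarrow> complex"
  assumes "finite I" and "\<And>N. N > 0 \<Longrightarrow> (\<Sum>k\<in>I. w k * of_real (dzeta_coeff k N)) = 0"
  shows "(\<Sum>k\<in>I. w k * of_real (if k = 0 then -1 else -1 / 2)) = 0"
proof -
  define A where "A = (\<Sum>k\<in>I. w k / of_nat (Suc k))"
  define B where "B = (\<Sum>k\<in>I. w k * of_real (if k = 0 then -1 else -1 / 2))"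
  have "(\<lambda>N. \<Sum>k\<in>I. w k * of_real (dzeta_coeff k N - real N / real (Suc k))) \<longlonglongrightarrow> B"
    unfolding B_def dzeta_coeff_def by (intro tendsto_intros power_sum_second_term)
  moreover have "\<forall>\<^sub>F N in sequentially.
      (\<Sum>k\<in>I. w k * of_real (dzeta_coeff k N - real N / real (Suc k))) = - A * of_nat N"
    using eventually_gt_at_top[of 0]
  proof eventually_elim
    case (elim N)
    have "(\<Sum>k\<in>I. w k * of_real (dzeta_coeff k N - real N / real (Suc k)))
            = (\<Sum>k\<in>I. w k * of_real (dzeta_coeff k N)) - A * of_nat N"
      by (simp add: A_def sum_subtractf sum_distrib_right right_diff_distrib)
    with elim show ?case
      by (simp add: assms(2))
  qed
  ultimately have "(\<lambda>N. - A * of_nat N) \<longlonglongrightarrow> B"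
    by (rule Lim_transform_eventually)
  then have "(\<lambda>N. - A * of_nat N + - B) \<longlonglongrightarrow> B + - B"
    by (intro tendsto_add tendsto_const)
  then show ?thesis
    using affine_sequence_tendsto_0D(2)[of "- A" "- B"] by (simp add: B_def)
qed

lemma has_sum_dzeta_combination:
  fixes w :: "nat \<Rightarrow> complex"
  assumes "finite I" and "x > 2"
  shows "((\<lambda>N. (\<Sum>k\<in>I. w k * of_real (dzeta_coeff k N)) * of_real (real N powr -x))
           has_sum (\<Sum>k\<in>I. w k * dzeta_series k (of_real x))) UNIV"
proof -
  have "((\<lambda>N. \<Sum>k\<in>I. w k * of_real (dzeta_coeff k N * real N powr -x))
           has_sum (\<Sum>k\<in>I. w k * dzeta_series k (of_real x))) UNIV"
    using assms by (intro has_sum_sum has_sum_cmult_right has_sum_dzeta_series)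
  then show ?thesis
    by (simp add: sum_distrib_right mult.assoc)
qed

lemma abs_summable_dzeta_combination:
  fixes w :: "nat \<Rightarrow> complex"
  assumes "finite I"
  shows "(\<lambda>N. norm (\<Sum>k\<in>I. w k * of_real (dzeta_coeff k N)) * real N powr -3) summable_on UNIV"
proof (rule summable_on_comparison_test)
  have "((\<lambda>N. \<Sum>k\<in>I. norm (w k) * (dzeta_coeff k N * real N powr -3))
          has_sum (\<Sum>k\<in>I. norm (w k) * (\<Sum>\<^sub>\<infinity>N. dzeta_coeff k N * real N powr -3))) UNIV"
    using assms by (intro has_sum_sum has_sum_cmult_right has_sum_infsum summable_dzeta_coeff) auto
  then show "(\<lambda>N. \<Sum>k\<in>I. norm (w k) * (dzeta_coeff k N * real N powr -3)) summable_on UNIV"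
    by (rule has_sum_imp_summable)
  fix N :: nat
  have "norm (\<Sum>k\<in>I. w k * of_real (dzeta_coeff k N)) \<le> (\<Sum>k\<in>I. norm (w k) * dzeta_coeff k N)"
    by (rule order_trans[OF norm_sum]) (simp add: norm_mult dzeta_coeff_nonneg)
  then have "norm (\<Sum>k\<in>I. w k * of_real (dzeta_coeff k N)) * real N powr -3
               \<le> (\<Sum>k\<in>I. norm (w k) * dzeta_coeff k N) * real N powr -3"
    by (rule mult_right_mono) simp
  then show "norm (\<Sum>k\<in>I. w k * of_real (dzeta_coeff k N)) * real N powr -3
               \<le> (\<Sum>k\<in>I. norm (w k) * (dzeta_coeff k N * real N powr -3))"
    by (simp add: sum_distrib_right mult.assoc)
qed simp

theorem corollary5p2:
  fixes m :: nat and c :: "nat \<Rightarrow> complex" and Z :: "nat \<Rightarrow> complex \<Rightarrow> complex"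
  assumes "m \<ge> 1"
    and "\<And>k. k \<le> 2 * m + 1 \<Longrightarrow> Z k meromorphic_on UNIV"
    and "\<And>k s. k \<le> 2 * m + 1 \<Longrightarrow> Re s > 2 \<Longrightarrow> Z k s = dzeta_series k s"
    and "\<forall>\<^sub>F s in cosparse UNIV.
           (\<Sum>k = 1..2 * m + 1. c k * Z k s) + c 0 * Z 0 s / 2 = 0"
  shows "(\<Sum>k = 0..2 * m + 1. c k) = 0"
proof -
  define K where "K = 2 * m + 1"
  define w where "w k = (if k = 0 then c 0 / 2 else c k)" for k
  define G where "G x = (\<Sum>k = 0..K. w k * dzeta_series k (of_real x))" for x
  have G_eq: "G x = (\<Sum>k = 1..K. c k * Z k (of_real x)) + c 0 * Z 0 (of_real x) / 2" if "x > 2" for x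
  proof -
    have "G x = w 0 * dzeta_series 0 (of_real x) + (\<Sum>k = Suc 0..K. w k * dzeta_series k (of_real x))"
      unfolding G_def by (rule sum.atLeast_Suc_atMost) simp
    also have "(\<Sum>k = Suc 0..K. w k * dzeta_series k (of_real x)) = (\<Sum>k = 1..K. c k * Z k (of_real x))"
      using that by (intro sum.cong) (auto simp: w_def K_def assms(3))
    finally show ?thesis
      using that by (simp add: w_def K_def assms(3))
  qed
  have "\<exists>\<^sub>F x in at_top. G x = 0"
    using frequently_eventually_conj[OF eventually_cosparse_imp_frequently_at_top_of_real[OF assms(4)]
        eventually_gt_at_top[of 2]]
    by (rule frequently_elim1) (simp add: G_eq K_def)
  then have "(\<Sum>k = 0..K. w k * of_real (dzeta_coeff k N)) = 0" if "N > 0" for N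
    using abs_summable_dzeta_combination has_sum_dzeta_combination that
    unfolding G_def by (intro dirichlet_series_coeff_eq_0[where \<sigma> = 3]) auto
  then have "(\<Sum>k = 0..K. w k * of_real (if k = 0 then -1 else -1 / 2)) = 0"
    by (intro dzeta_coeff_combination_eq_0D) auto
  moreover have "w k * of_real (if k = 0 then -1 else -1 / 2) = - c k / 2" for k
    by (simp add: w_def)
  ultimately show ?thesis
    by (simp add: K_def sum_negf sum_divide_distrib[symmetric])
qed

end
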